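(* Assume the Elliott–Halberstam Conjecture, fix $\delta>0$ and a constant $C\ge 3$. Then $g_n-g_n(n^{1+\delta}) = o(1/n)$ for all but $\ll x/\log^C x$ natural numbers $n\le x$; that is, for every $\epsilon>0$, the number of natural numbers $n\le x$ with $|g_n-g_n(n^{1+\delta})|>\epsilon/n$ is $\ll x/\log^C x$.
   Context: Elliott–Halberstam Conjecture: for any $\delta'>0$ and any $A>0$, $$\sum_{k<x^{1-\delta'}} \max_{(l,k)=1}\max_{y\le x}\left|\pi(y,k,l)-\frac{\operatorname{li} y}{\phi(k)}\right| \ll_{\delta',A} \frac{x}{\log^A x},$$ where $\pi(y,k,l)$ is the number of primes $p\le y$ with $p\equiv l \pmod k$ and $\operatorname{li} y=\int_2^y dt/\log t$. For a natural number $n$ and real $x$, $g_n(x) = \sum_{q\le x,\ q\text{ prime},\ q\equiv 1 (n)} 1/q - \sum_{q\le x,\ q\text{ prime},\ q\equiv -1 (n)} 1/q$, and $g_n=\lim_{x\to\infty}g_n(x)$. *)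

theory Defs
  imports "HOL-Analysis.Analysis" "HOL-Number_Theory.Number_Theory"
begin

definition li :: "real \<Rightarrow> real" where
  "li y = integral {2..y} (\<lambda>t. 1 / ln t)"

definition prime_count_ap :: "real \<Rightarrow> nat \<Rightarrow> nat \<Rightarrow> nat" where
  "prime_count_ap y k l = card {p::nat. prime p \<and> real p \<le> y \<and> [p = l] (mod k)}"

text \<open>The max over residues l is over 0 \<le> l < k with
  gcd(l,k)=1 (pi(y,k,l) depends only on l mod k); the max over y \<le> x is over 2 \<le> y \<le> x
  (the range where li is meaningful).\<close>
definition EH_error :: "real \<Rightarrow> nat \<Rightarrow> real" where
  "EH_error x k =
     (SUP l\<in>{l. l < k \<and> coprime l k}.
        (SUP y\<in>{2..x}. \<bar>real (prime_count_ap y k l) - li y / real (totient k)\<bar>))"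

definition Elliott_Halberstam :: bool where
  "Elliott_Halberstam \<longleftrightarrow>
     (\<forall>\<delta>'>0. \<forall>A>0. \<exists>K. \<forall>\<^sub>F x in at_top.
        (\<Sum>k\<in>{k::nat. 1 \<le> k \<and> real k < x powr (1 - \<delta>')}. EH_error x k)
          \<le> K * x / (ln x) powr A)"

definition g_partial :: "nat \<Rightarrow> real \<Rightarrow> real" where
  "g_partial n x =
     (\<Sum>q\<in>{q::nat. prime q \<and> real q \<le> x \<and> [int q = 1] (mod int n)}. 1 / real q)
   - (\<Sum>q\<in>{q::nat. prime q \<and> real q \<le> x \<and> [int q = -1] (mod int n)}. 1 / real q)"

definition g_lim :: "nat \<Rightarrow> real" where
  "g_lim n = Lim at_top (g_partial n)"

end

theory Submission
  imports Defs "HOL-Real_Asymp.Real_Asymp"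
begin

text \<open>
  Partial summation writes g_n(x) - g_n(y) in terms of the counting difference
  pi(t,n,1) - pi(t,n,-1), which is at most twice the Elliott--Halberstam error E(X,n)
  for t <= X. On a dyadic block [2^j, 2^(j+1)] this gives
  |g_n(x) - g_n(y)| <= 8 E(2^(j+1),n) / 2^(j+1); summing over the blocks beyond y shows
  that g_n(x) converges and that |g_n - g_n(y)| is at most eight times the dyadic tail
  sum_{2^j > y} E(2^j,n) / 2^j.

  An exceptional n > sqrt x therefore has n times its tail at y = n^(1+delta) at least
  epsilon/8. Summing these weights over n <= x and exchanging the order of summation, the
  scale 2^j only involves moduli n < 2^(j/(1+delta)), so Elliott--Halberstam bounds its
  contribution by x / j^(C+2); since 2^j > sqrt x this is at most x / (j^2 (log x)^C), and
  the sum over j converges.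
\<close>

lemma le_nat_floor_iff: "0 \<le> x \<Longrightarrow> real q \<le> x \<longleftrightarrow> q \<le> nat \<lfloor>x\<rfloor>"
  using le_nat_floor of_nat_floor of_nat_le_iff by linarith

lemma two_le_two_power: "1 \<le> j \<Longrightarrow> (2::real) \<le> 2 ^ j"
  using power_increasing[of 1 j "2::real"] by simp

lemma powr_mult_square_le:
  fixes w u C :: real
  assumes "0 < w" "w \<le> u" "0 \<le> C"
  shows "w powr C * u\<^sup>2 \<le> u powr (C + 2)"
proof -
  have "u powr (C + 2) = u powr C * u\<^sup>2"
    using assms by (simp add: powr_add powr_numeral)
  moreover have "w powr C \<le> u powr C"
    using assms by (intro powr_mono2) auto
  ultimately show ?thesis
    by (simp add: mult_right_mono)
qed

lemma summable_inverse_ln_two_power_square: "summable (\<lambda>j. inverse ((real j * ln 2)\<^sup>2))"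
proof -
  have "summable (\<lambda>j. inverse (real j ^ 2) * inverse (ln 2 ^ 2))"
    by (intro summable_mult2 inverse_power_summable) simp
  then show ?thesis
    by (simp add: power_mult_distrib)
qed

lemma card_le_sum_weights:
  fixes w :: "'a \<Rightarrow> real"
  assumes "finite S" "\<And>n. n \<in> S \<Longrightarrow> 0 \<le> w n" "\<And>n. n \<in> S \<Longrightarrow> P n \<Longrightarrow> 1 \<le> w n"
  shows "real (card {n \<in> S. P n}) \<le> (\<Sum>n\<in>S. w n)"
proof -
  have "real (card {n \<in> S. P n}) = (\<Sum>n\<in>{n \<in> S. P n}. 1)"
    by simp
  also have "\<dots> \<le> (\<Sum>n\<in>{n \<in> S. P n}. w n)"
    using assms(3) by (intro sum_mono) auto
  also have "\<dots> \<le> (\<Sum>n\<in>S. w n)"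
    using assms(1,2) by (intro sum_mono2) auto
  finally show ?thesis .
qed

lemma card_le_small_plus_large:
  assumes "0 \<le> x"
  shows "real (card {n::nat. 1 \<le> n \<and> real n \<le> x \<and> P n})
    \<le> real N + sqrt x + real (card {n \<in> {n. N \<le> n \<and> sqrt x < real n \<and> real n \<le> x}. P n})"
proof -
  let ?large = "{n \<in> {n. N \<le> n \<and> sqrt x < real n \<and> real n \<le> x}. P n}"
  have "finite ?large"
    by (rule finite_subset[of _ "{..nat \<lfloor>x\<rfloor>}"]) (use le_nat_floor in auto)
  moreover have "{n. 1 \<le> n \<and> real n \<le> x \<and> P n} \<subseteq> {..<N} \<union> {1..nat \<lfloor>sqrt x\<rfloor>} \<union> ?large"
  proof
    fix n
    assume n: "n \<in> {n. 1 \<le> n \<and> real n \<le> x \<and> P n}"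
    show "n \<in> {..<N} \<union> {1..nat \<lfloor>sqrt x\<rfloor>} \<union> ?large"
    proof (cases "real n \<le> sqrt x")
      case True
      then show ?thesis using n le_nat_floor[of n "sqrt x"] by auto
    next
      case False
      then show ?thesis using n by auto
    qed
  qed
  ultimately have "card {n. 1 \<le> n \<and> real n \<le> x \<and> P n} \<le> card ({..<N} \<union> {1..nat \<lfloor>sqrt x\<rfloor>} \<union> ?large)"
    by (intro card_mono) auto
  also have "\<dots> \<le> N + nat \<lfloor>sqrt x\<rfloor> + card ?large"
    using card_Un_le[of "{..<N}" "{1..nat \<lfloor>sqrt x\<rfloor>}"] card_Un_le[of "{..<N} \<union> {1..nat \<lfloor>sqrt x\<rfloor>}" ?large]
    by simp
  finally have "real (card {n. 1 \<le> n \<and> real n \<le> x \<and> P n})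
      \<le> real N + real (nat \<lfloor>sqrt x\<rfloor>) + real (card ?large)"
    by (simp only: of_nat_add[symmetric] of_nat_le_iff)
  then show ?thesis
    using of_nat_floor[OF real_sqrt_ge_zero[OF assms]] by linarith
qed

lemma cong_pred_iff_cong_minus_one:
  assumes "1 \<le> n"
  shows "[p = n - 1] (mod n) \<longleftrightarrow> [int p = -1] (mod int n)"
proof -
  have "[p = n - 1] (mod n) \<longleftrightarrow> [int p = int n - 1] (mod int n)"
    using assms by (simp add: cong_int_iff[symmetric] of_nat_diff)
  also have "\<dots> \<longleftrightarrow> int n dvd ((int p + 1) + (-1) * int n)"
    by (simp add: cong_iff_dvd_diff algebra_simps)
  also have "\<dots> \<longleftrightarrow> [int p = -1] (mod int n)"
    by (simp only: dvd_add_times_triv_right_iff) (simp add: cong_iff_dvd_diff)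
  finally show ?thesis .
qed

lemma partial_summation_bound:
  fixes a :: "nat \<Rightarrow> real"
  assumes "A \<le> B" and bound: "\<And>m. A \<le> m \<Longrightarrow> m \<le> B \<Longrightarrow> \<bar>\<Sum>q\<le>m. a q\<bar> \<le> M"
  shows "\<bar>(\<Sum>q\<le>B. a q / q) - (\<Sum>q\<le>A. a q / q)\<bar> \<le> 2 * M / (real A + 1)"
proof -
  define S D where "S N = (\<Sum>q\<le>N. a q / q)" and "D N = (\<Sum>q\<le>N. a q)" for N
  have summation: "\<bar>S N - S A - D N / (real N + 1) + D A / (real A + 1)\<bar>
      \<le> M * (1 / (real A + 1) - 1 / (real N + 1))"
    if "A \<le> N" "N \<le> B" for N
    using that
  proof (induction N rule: dec_induct)
    case base
    then show ?case by simp
  next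
    case (step N)
    define c where "c = 1 / (real N + 1) - 1 / (real N + 2)"
    have c: "0 \<le> c" by (simp add: c_def frac_le)
    have "S (Suc N) = S N + a (Suc N) / (real N + 1)" "D (Suc N) = D N + a (Suc N)"
      by (simp_all add: S_def D_def)
    then have "S (Suc N) - S A - D (Suc N) / (real (Suc N) + 1) + D A / (real A + 1)
        = (S N - S A - D N / (real N + 1) + D A / (real A + 1)) + D (Suc N) * c"
      by (simp add: c_def divide_inverse algebra_simps)
    moreover have "\<bar>D (Suc N) * c\<bar> \<le> M * c"
      using bound[of "Suc N"] step c by (simp add: D_def abs_mult mult_right_mono)
    moreover have "M * (1 / (real A + 1) - 1 / (real N + 1)) + M * c
        = M * (1 / (real A + 1) - 1 / (real (Suc N) + 1))"
      by (simp add: c_def algebra_simps)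
    ultimately show ?case using step by linarith
  qed
  have "\<bar>D B / (real B + 1)\<bar> \<le> M / (real B + 1)" "\<bar>D A / (real A + 1)\<bar> \<le> M / (real A + 1)"
    using bound assms(1) by (auto simp: D_def abs_divide divide_right_mono)
  moreover have "M * (1 / (real A + 1) - 1 / (real B + 1)) = M / (real A + 1) - M / (real B + 1)"
    by (simp add: right_diff_distrib)
  ultimately show ?thesis
    using summation[OF assms(1) order.refl] unfolding S_def by linarith
qed

lemma tendsto_Lim_at_top_of_dist_le:
  fixes f :: "real \<Rightarrow> 'a::complete_space" and t :: "real \<Rightarrow> real"
  assumes t: "(t \<longlongrightarrow> 0) at_top"
    and dist_le: "\<And>x y. Y \<le> y \<Longrightarrow> y \<le> x \<Longrightarrow> dist (f x) (f y) \<le> t y"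
  shows "(f \<longlongrightarrow> Lim at_top f) at_top"
proof -
  have "cauchy_filter (filtermap f at_top)"
    unfolding cauchy_filter_metric_filtermap
  proof (intro allI impI)
    fix e :: real
    assume "0 < e"
    then have "\<forall>\<^sub>F y in at_top. t y < e / 2"
      by (intro order_tendstoD(2)[OF t]) simp
    then obtain Z where Z: "\<And>y. Z \<le> y \<Longrightarrow> t y < e / 2"
      by (auto simp: eventually_at_top_linorder)
    define Z' where "Z' = max Y Z"
    have "dist (f x) (f y) < e" if "Z' \<le> x" "Z' \<le> y" for x y
    proof -
      have "dist (f x) (f y) \<le> dist (f x) (f Z') + dist (f y) (f Z')"
        by (rule dist_triangle2)
      also have "\<dots> \<le> t Z' + t Z'"
        using that by (intro add_mono dist_le) (auto simp: Z'_def)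
      also have "\<dots> < e"
        using Z[of Z'] by (simp add: Z'_def)
      finally show ?thesis .
    qed
    then show "\<exists>P. eventually P at_top \<and> (\<forall>x y. P x \<and> P y \<longrightarrow> dist (f x) (f y) < e)"
      by (intro exI[of _ "\<lambda>x. Z' \<le> x"]) auto
  qed
  moreover have "filtermap f at_top \<noteq> bot"
    by (simp add: filtermap_bot_iff)
  ultimately obtain L where "filtermap f at_top \<le> nhds L"
    using cauchy_filter_complete_converges[OF _ complete_UNIV] by auto
  then have "(f \<longlongrightarrow> L) at_top"
    by (simp add: filterlim_def)
  moreover from this have "Lim at_top f = L"
    by (intro tendsto_Lim) auto
  ultimately show ?thesis by simp
qed

lemma dist_tendsto_le:
  fixes f :: "real \<Rightarrow> 'a::metric_space"
  assumes "(f \<longlongrightarrow> L) at_top" and "\<And>x. y \<le> x \<Longrightarrow> dist (f x) (f y) \<le> c"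
  shows "dist L (f y) \<le> c"
proof (rule tendsto_upperbound)
  show "((\<lambda>x. dist (f x) (f y)) \<longlongrightarrow> dist L (f y)) at_top"
    by (intro tendsto_intros assms(1))
  show "\<forall>\<^sub>F x in at_top. dist (f x) (f y) \<le> c"
    using eventually_ge_at_top[of y] by eventually_elim (rule assms(2))
qed simp

lemma li_nonneg_le:
  assumes "2 \<le> y"
  shows "0 \<le> li y \<and> li y \<le> 2 * y"
proof -
  have int: "(\<lambda>t. 1 / ln t) integrable_on {2..y}"
    by (intro integrable_continuous_interval continuous_intros) auto
  have bounds: "0 \<le> 1 / ln t \<and> 1 / ln t \<le> (2::real)" if "t \<in> {2..y}" for t
  proof -
    have "ln 2 \<le> ln t" using that by simp
    then have "1 / 2 < ln t" using ln2_ge_two_thirds by linarith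
    then show ?thesis by (auto simp: field_simps)
  qed
  have "0 \<le> li y"
    unfolding li_def using bounds by (intro integral_nonneg[OF int]) auto
  moreover have "li y \<le> integral {2..y} (\<lambda>t. 2::real)"
    unfolding li_def using bounds by (intro integral_le[OF int]) auto
  ultimately show ?thesis using assms by simp
qed

lemma prime_count_ap_le:
  assumes "0 \<le> y"
  shows "real (prime_count_ap y k l) \<le> y + 1"
proof -
  have "{p. prime p \<and> real p \<le> y \<and> [p = l] (mod k)} \<subseteq> {..nat \<lfloor>y\<rfloor>}"
    by (auto simp: le_nat_floor)
  then have "prime_count_ap y k l \<le> card {..nat \<lfloor>y\<rfloor>}"
    unfolding prime_count_ap_def by (intro card_mono) auto
  with assms show ?thesis by simp linarith
qed

lemma prime_count_ap_error_le:
  assumes "2 \<le> y" "y \<le> X"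
  shows "\<bar>real (prime_count_ap y k l) - li y / real (totient k)\<bar> \<le> 3 * X + 1"
proof -
  have li: "0 \<le> li y" "li y \<le> 2 * y" using li_nonneg_le assms(1) by auto
  have "li y / real (totient k) \<le> li y"
  proof (cases "totient k = 0")
    case False
    then have "1 \<le> real (totient k)" by linarith
    with li show ?thesis by (simp add: divide_le_eq mult_le_cancel_left1)
  qed (use li in simp)
  moreover have "0 \<le> li y / real (totient k)" using li by simp
  moreover have "real (prime_count_ap y k l) \<le> y + 1" using assms by (intro prime_count_ap_le) auto
  ultimately show ?thesis unfolding abs_le_iff using assms li by (intro conjI) linarith+
qed

lemma prime_count_ap_error_le_EH_error:
  assumes "l < k" "coprime l k" "2 \<le> y" "y \<le> X"
  shows "\<bar>real (prime_count_ap y k l) - li y / real (totient k)\<bar> \<le> EH_error X k"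
proof -
  have bdd: "bdd_above ((\<lambda>y. \<bar>real (prime_count_ap y k l) - li y / real (totient k)\<bar>) ` {2..X})"
    using prime_count_ap_error_le by (intro bdd_aboveI2[of _ _ "3 * X + 1"]) auto
  have "\<bar>real (prime_count_ap y k l) - li y / real (totient k)\<bar>
      \<le> (SUP y\<in>{2..X}. \<bar>real (prime_count_ap y k l) - li y / real (totient k)\<bar>)"
    by (rule cSUP_upper[OF _ bdd]) (use assms in simp)
  also have "\<dots> \<le> EH_error X k"
    unfolding EH_error_def using assms by (intro cSUP_upper bdd_above_finite finite_imageI) auto
  finally show ?thesis .
qed

lemma EH_error_nonneg:
  assumes "1 \<le> k" "2 \<le> X"
  shows "0 \<le> EH_error X k"
proof -
  have "\<exists>l. l < k \<and> coprime l k"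
  proof (cases "k = 1")
    case False
    with assms show ?thesis by (intro exI[of _ 1]) auto
  qed (intro exI[of _ 0], simp)
  then obtain l where "l < k" "coprime l k" by blast
  then have "\<bar>real (prime_count_ap X k l) - li X / real (totient k)\<bar> \<le> EH_error X k"
    using assms by (intro prime_count_ap_error_le_EH_error) auto
  then show ?thesis by linarith
qed

definition prime_char :: "nat \<Rightarrow> nat \<Rightarrow> real" where
  "prime_char n q = of_bool (prime q \<and> [int q = 1] (mod int n))
                  - of_bool (prime q \<and> [int q = -1] (mod int n))"

lemma g_partial_eq_sum:
  assumes "0 \<le> x"
  shows "g_partial n x = (\<Sum>q\<le>nat \<lfloor>x\<rfloor>. prime_char n q / real q)"
proof -
  have sum_eq: "(\<Sum>q\<in>{q. prime q \<and> real q \<le> x \<and> P q}. 1 / real q)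
      = (\<Sum>q\<le>nat \<lfloor>x\<rfloor>. 1 / real q * of_bool (prime q \<and> P q))" for P
  proof -
    have "{q. prime q \<and> real q \<le> x \<and> P q} = {..nat \<lfloor>x\<rfloor>} \<inter> {q. prime q \<and> P q}"
      using le_nat_floor_iff[OF assms] by auto
    then show ?thesis by (simp only: sum_mult_of_bool_eq[OF finite_atMost])
  qed
  have "prime_char n q / real q = 1 / real q * of_bool (prime q \<and> [int q = 1] (mod int n))
      - 1 / real q * of_bool (prime q \<and> [int q = -1] (mod int n))" for q
    by (simp add: prime_char_def diff_divide_distrib)
  then show ?thesis
    unfolding g_partial_def sum_eq by (simp only: sum_subtractf)
qed

lemma sum_prime_char_eq:
  assumes "1 \<le> n"
  shows "(\<Sum>q\<le>N. prime_char n q) = real (prime_count_ap N n 1) - real (prime_count_ap N n (n - 1))"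
proof -
  have "[int q = 1] (mod int n) \<longleftrightarrow> [q = 1] (mod n)" for q
    using cong_int_iff[of q 1 n] by simp
  then have "prime_count_ap N n 1 = card ({..N} \<inter> {q. prime q \<and> [int q = 1] (mod int n)})"
    unfolding prime_count_ap_def by (intro arg_cong[where f = card]) auto
  moreover have "prime_count_ap N n (n - 1) = card ({..N} \<inter> {q. prime q \<and> [int q = -1] (mod int n)})"
    unfolding prime_count_ap_def using cong_pred_iff_cong_minus_one[OF assms]
    by (intro arg_cong[where f = card]) auto
  ultimately show ?thesis by (simp add: prime_char_def sum_subtractf)
qed

lemma sum_prime_char_le:
  assumes "3 \<le> n" "2 \<le> N" "real N \<le> X"
  shows "\<bar>\<Sum>q\<le>N. prime_char n q\<bar> \<le> 2 * EH_error X n"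
proof -
  let ?L = "li (real N) / real (totient n)"
  have "\<bar>real (prime_count_ap N n 1) - ?L\<bar> \<le> EH_error X n"
    using assms by (intro prime_count_ap_error_le_EH_error) auto
  moreover have "\<bar>real (prime_count_ap N n (n - 1)) - ?L\<bar> \<le> EH_error X n"
    using assms coprime_diff_one_left_nat[of n] by (intro prime_count_ap_error_le_EH_error) auto
  moreover have "(\<Sum>q\<le>N. prime_char n q) = real (prime_count_ap N n 1) - real (prime_count_ap N n (n - 1))"
    using assms by (intro sum_prime_char_eq) auto
  ultimately show ?thesis by linarith
qed

lemma g_partial_diff_le:
  assumes "3 \<le> n" "2 \<le> y" "y \<le> x" "x \<le> X"
  shows "\<bar>g_partial n x - g_partial n y\<bar> \<le> 4 * EH_error X n / y"
proof -
  define A B where "A = nat \<lfloor>y\<rfloor>" and "B = nat \<lfloor>x\<rfloor>"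
  have "2 \<le> A"
    unfolding A_def using assms(2) le_nat_floor[of 2 y] by simp
  have "A \<le> B"
    unfolding A_def B_def using assms(3) by (intro nat_mono floor_mono)
  have "real B \<le> X"
    unfolding B_def using assms of_nat_floor[of x] by linarith
  have "y \<le> real A + 1"
    unfolding A_def using assms(2) floor_correct[of y] by simp
  have bound: "\<bar>\<Sum>q\<le>m. prime_char n q\<bar> \<le> 2 * EH_error X n" if "A \<le> m" "m \<le> B" for m
    using that \<open>2 \<le> A\<close> \<open>real B \<le> X\<close> assms(1) by (intro sum_prime_char_le) auto
  have "\<bar>g_partial n x - g_partial n y\<bar> = \<bar>(\<Sum>q\<le>B. prime_char n q / q) - (\<Sum>q\<le>A. prime_char n q / q)\<bar>"
    using assms by (simp add: A_def B_def g_partial_eq_sum)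
  also have "\<dots> \<le> 2 * (2 * EH_error X n) / (real A + 1)"
    using \<open>A \<le> B\<close> bound by (rule partial_summation_bound)
  also have "\<dots> \<le> 4 * EH_error X n / y"
    using EH_error_nonneg[of n X] assms \<open>y \<le> real A + 1\<close> by (simp add: divide_left_mono)
  finally show ?thesis .
qed

text \<open>The value dyadic_error n 0 is junk (EH_error at X = 1 is a supremum over empty sets);
  it never enters dyadic_tail n y for y >= 1.\<close>

definition dyadic_error :: "nat \<Rightarrow> nat \<Rightarrow> real" where
  "dyadic_error n j = EH_error (2 ^ j) n / 2 ^ j"

definition dyadic_tail :: "nat \<Rightarrow> real \<Rightarrow> real" where
  "dyadic_tail n y = (\<Sum>j. if y < 2 ^ j then dyadic_error n j else 0)"

lemma dyadic_error_nonneg: "1 \<le> n \<Longrightarrow> 1 \<le> j \<Longrightarrow> 0 \<le> dyadic_error n j"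
  unfolding dyadic_error_def by (simp add: EH_error_nonneg two_le_two_power)

lemma dyadic_tail_term_nonneg:
  fixes y :: real
  assumes "1 \<le> n" "1 \<le> y"
  shows "0 \<le> (if y < 2 ^ j then dyadic_error n j else 0)"
proof (cases "y < 2 ^ j")
  case True
  then have "j \<noteq> 0" using assms(2) by (cases j) auto
  with True assms(1) show ?thesis by (auto intro!: dyadic_error_nonneg)
qed simp

lemma summable_dyadic_tail_terms:
  assumes "1 \<le> n" "summable (dyadic_error n)"
  shows "summable (\<lambda>j. if P j then dyadic_error n j else 0)"
proof (rule summable_comparison_test_ev[OF _ assms(2)])
  show "\<forall>\<^sub>F j in sequentially. norm (if P j then dyadic_error n j else 0) \<le> dyadic_error n j"
    using eventually_ge_at_top[of "1::nat"]
    by eventually_elim (use assms(1) dyadic_error_nonneg in auto)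
qed

lemma dyadic_tail_nonneg:
  assumes "1 \<le> n" "1 \<le> y" "summable (dyadic_error n)"
  shows "0 \<le> dyadic_tail n y"
  unfolding dyadic_tail_def
  using summable_dyadic_tail_terms[OF assms(1,3)] dyadic_tail_term_nonneg[OF assms(1,2)]
  by (rule suminf_nonneg)

lemma g_partial_diff_le_dyadic_error:
  assumes "3 \<le> n" "2 \<le> y" "2 ^ j \<le> y" "y \<le> x" "x \<le> 2 ^ Suc j"
  shows "\<bar>g_partial n x - g_partial n y\<bar> \<le> 8 * dyadic_error n (Suc j)"
proof -
  have E: "0 \<le> EH_error (2 ^ Suc j) n"
    using assms(1) by (intro EH_error_nonneg two_le_two_power) auto
  have "\<bar>g_partial n x - g_partial n y\<bar> \<le> 4 * EH_error (2 ^ Suc j) n / y"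
    using assms by (intro g_partial_diff_le) auto
  also have "\<dots> \<le> 4 * EH_error (2 ^ Suc j) n / 2 ^ j"
    using E assms(2,3) by (intro divide_left_mono) auto
  also have "\<dots> = 8 * dyadic_error n (Suc j)"
    by (simp add: dyadic_error_def)
  finally show ?thesis .
qed

lemma g_partial_diff_le_dyadic_sum:
  assumes "3 \<le> n" "2 \<le> y" "y \<le> x" "x \<le> 2 ^ k"
  shows "\<bar>g_partial n x - g_partial n y\<bar> \<le> 8 * (\<Sum>j\<le>k. if y < 2 ^ j then dyadic_error n j else 0)"
  using assms(3,4)
proof (induction k arbitrary: x)
  case 0
  with assms(2) show ?case by simp
next
  case (Suc k)
  let ?t = "\<lambda>j. if y < 2 ^ j then dyadic_error n j else 0"
  have t_nonneg: "0 \<le> ?t j" for j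
    using assms by (intro dyadic_tail_term_nonneg) auto
  have sum_Suc: "(\<Sum>j\<le>Suc k. ?t j) = (\<Sum>j\<le>k. ?t j) + ?t (Suc k)"
    by simp
  have sum_nonneg: "0 \<le> (\<Sum>j\<le>k. ?t j)"
    by (intro sum_nonneg t_nonneg)
  have pow_less: "(2::real) ^ k < 2 ^ Suc k"
    by simp
  consider (low) "x \<le> 2 ^ k" | (split) "2 ^ k < x" "y \<le> 2 ^ k" | (block) "2 ^ k < y" "y < 2 ^ Suc k"
    | (top) "2 ^ Suc k \<le> y"
    by linarith
  then show ?case
  proof cases
    case low
    then show ?thesis
      using Suc.IH[OF Suc.prems(1) low] sum_Suc t_nonneg[of "Suc k"] by linarith
  next
    case split
    have "\<bar>g_partial n x - g_partial n (2 ^ k)\<bar> \<le> 8 * dyadic_error n (Suc k)"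
      using assms(1,2) split Suc.prems by (intro g_partial_diff_le_dyadic_error) auto
    moreover have "\<bar>g_partial n (2 ^ k) - g_partial n y\<bar> \<le> 8 * (\<Sum>j\<le>k. ?t j)"
      using Suc.IH[of "2 ^ k"] split by simp
    moreover have "y < 2 ^ Suc k"
      using split pow_less by linarith
    then have "?t (Suc k) = dyadic_error n (Suc k)"
      by simp
    ultimately show ?thesis using sum_Suc by linarith
  next
    case block
    have "\<bar>g_partial n x - g_partial n y\<bar> \<le> 8 * dyadic_error n (Suc k)"
      using assms(1,2) block Suc.prems by (intro g_partial_diff_le_dyadic_error) auto
    moreover have "?t (Suc k) = dyadic_error n (Suc k)"
      using block by simp
    ultimately show ?thesis using sum_Suc sum_nonneg by linarith
  next
    case top
    then have "x = y" using Suc.prems by linarith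
    then show ?thesis using sum_Suc sum_nonneg t_nonneg[of "Suc k"] by simp
  qed
qed

lemma g_partial_diff_le_dyadic_tail:
  assumes "3 \<le> n" "summable (dyadic_error n)" "2 \<le> y" "y \<le> x"
  shows "\<bar>g_partial n x - g_partial n y\<bar> \<le> 8 * dyadic_tail n y"
proof -
  obtain k where "x < 2 ^ k"
    using real_arch_pow[of 2 x] by auto
  have "(\<Sum>j\<le>k. if y < 2 ^ j then dyadic_error n j else 0) \<le> dyadic_tail n y"
    unfolding dyadic_tail_def using assms
    by (intro sum_le_suminf summable_dyadic_tail_terms dyadic_tail_term_nonneg) auto
  with g_partial_diff_le_dyadic_sum[OF assms(1,3,4) less_imp_le[OF \<open>x < 2 ^ k\<close>]] show ?thesis
    by linarith
qed

lemma dyadic_tail_tendsto_zero: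
  assumes "1 \<le> n" "summable (dyadic_error n)"
  shows "(dyadic_tail n \<longlongrightarrow> 0) at_top"
proof (rule tendstoI)
  fix r :: real
  assume "0 < r"
  from suminf_exist_split[OF \<open>0 < r\<close> assms(2)]
  obtain N where N: "\<forall>m\<ge>N. norm (\<Sum>i. dyadic_error n (i + m)) < r" ..
  define M where "M = max N 1"
  have tail_less: "(\<Sum>i. dyadic_error n (i + M)) < r"
    using N[rule_format, of M] by (simp add: M_def)
  have less: "dyadic_tail n y < r" if "2 ^ M \<le> y" for y
  proof -
    let ?t = "\<lambda>j. if y < 2 ^ j then dyadic_error n j else 0"
    have "?t j = 0" if "j < M" for j
    proof -
      have "(2::real) ^ j \<le> 2 ^ M" using that by (intro power_increasing) auto
      with \<open>2 ^ M \<le> y\<close> have "\<not> y < 2 ^ j" by linarith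
      then show ?thesis by simp
    qed
    then have "(\<Sum>i<M. ?t i) = 0"
      by (intro sum.neutral) auto
    then have "dyadic_tail n y = (\<Sum>i. ?t (i + M))"
      unfolding dyadic_tail_def
      using suminf_split_initial_segment[OF summable_dyadic_tail_terms[OF assms], of _ M] by simp
    also have "\<dots> \<le> (\<Sum>i. dyadic_error n (i + M))"
    proof (rule suminf_le)
      show "?t (i + M) \<le> dyadic_error n (i + M)" for i
        using assms(1) by (auto simp: M_def intro: dyadic_error_nonneg)
      show "summable (\<lambda>i. ?t (i + M))"
        using summable_dyadic_tail_terms[OF assms] by (subst summable_iff_shift)
      show "summable (\<lambda>i. dyadic_error n (i + M))"
        using assms(2) by (subst summable_iff_shift)
    qed
    finally show ?thesis using tail_less by linarith
  qed
  have nonneg: "0 \<le> dyadic_tail n y" if "2 ^ M \<le> y" for y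
  proof -
    have "(1::real) \<le> 2 ^ M" by simp
    with that have "1 \<le> y" by linarith
    then show ?thesis by (rule dyadic_tail_nonneg[OF assms(1) _ assms(2)])
  qed
  show "\<forall>\<^sub>F y in at_top. dist (dyadic_tail n y) 0 < r"
    using eventually_ge_at_top[of "(2::real) ^ M"]
    by eventually_elim (use less nonneg in auto)
qed

lemma g_lim_dist_le:
  assumes "3 \<le> n" "summable (dyadic_error n)" "2 \<le> y"
  shows "\<bar>g_lim n - g_partial n y\<bar> \<le> 8 * dyadic_tail n y"
proof -
  have dist_le: "dist (g_partial n x) (g_partial n y') \<le> 8 * dyadic_tail n y'"
    if "2 \<le> y'" "y' \<le> x" for x y'
    using g_partial_diff_le_dyadic_tail[OF assms(1,2) that] by (simp add: dist_real_def)
  have lim: "(g_partial n \<longlongrightarrow> g_lim n) at_top"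
    unfolding g_lim_def
  proof (rule tendsto_Lim_at_top_of_dist_le)
    show "((\<lambda>y. 8 * dyadic_tail n y) \<longlongrightarrow> 0) at_top"
      using assms by (intro tendsto_mult_right_zero dyadic_tail_tendsto_zero) auto
    show "dist (g_partial n x) (g_partial n y') \<le> 8 * dyadic_tail n y'"
      if "2 \<le> y'" "y' \<le> x" for x y'
      using that by (rule dist_le)
  qed
  have "dist (g_lim n) (g_partial n y) \<le> 8 * dyadic_tail n y"
    using lim by (rule dist_tendsto_le) (use dist_le assms(3) in auto)
  then show ?thesis by (simp add: dist_real_def)
qed

text \<open>The Elliott--Halberstam bound at level 1/(1+delta), so that it covers the moduli n with
  n^(1+delta) < X, and with saving (log X)^(C+2): the extra (log X)^2 makes the sum over
  dyadic scales converge.\<close>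

locale EH_bound =
  fixes \<delta> C K X\<^sub>0 :: real
  assumes delta_pos: "0 < \<delta>" and C_nonneg: "0 \<le> C" and K_nonneg: "0 \<le> K" and X\<^sub>0_ge: "2 \<le> X\<^sub>0"
    and EH_sum_le: "\<And>X. X\<^sub>0 \<le> X \<Longrightarrow>
      (\<Sum>k\<in>{k. 1 \<le> k \<and> real k < X powr (1 / (1 + \<delta>))}. EH_error X k) \<le> K * X / ln X powr (C + 2)"
begin

lemma sum_dyadic_error_le:
  assumes "X\<^sub>0 \<le> 2 ^ j" and S: "\<And>k. k \<in> S \<Longrightarrow> 1 \<le> k \<and> real k < (2 ^ j) powr (1 / (1 + \<delta>))"
  shows "(\<Sum>k\<in>S. dyadic_error k j) \<le> K / (real j * ln 2) powr (C + 2)"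
proof -
  let ?I = "{k. 1 \<le> k \<and> real k < (2 ^ j) powr (1 / (1 + \<delta>))}"
  have "finite ?I"
    by (rule finite_subset[of _ "{..nat \<lceil>(2 ^ j) powr (1 / (1 + \<delta>))\<rceil>}"]) (auto, linarith)
  moreover have "2 \<le> (2::real) ^ j"
    using assms(1) X\<^sub>0_ge by linarith
  ultimately have "(\<Sum>k\<in>S. EH_error (2 ^ j) k) \<le> (\<Sum>k\<in>?I. EH_error (2 ^ j) k)"
    using S by (intro sum_mono2) (auto intro: EH_error_nonneg)
  also have "\<dots> \<le> K * 2 ^ j / ln (2 ^ j) powr (C + 2)"
    by (rule EH_sum_le[OF assms(1)])
  also have "ln ((2::real) ^ j) = real j * ln 2"
    by (simp add: ln_realpow)
  finally have "(\<Sum>k\<in>S. EH_error (2 ^ j) k) / 2 ^ j \<le> K * 2 ^ j / (real j * ln 2) powr (C + 2) / 2 ^ j"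
    by (intro divide_right_mono) auto
  then show ?thesis
    by (simp add: dyadic_error_def sum_divide_distrib)
qed

lemma summable_dyadic_error:
  assumes "1 \<le> n"
  shows "summable (dyadic_error n)"
proof (rule summable_comparison_test_ev)
  show "summable (\<lambda>j. K / ln 2 powr C * inverse ((real j * ln 2)\<^sup>2))"
    by (intro summable_mult summable_inverse_ln_two_power_square)
  obtain j\<^sub>0 where j\<^sub>0: "max X\<^sub>0 (real n powr (1 + \<delta>)) < 2 ^ j\<^sub>0"
    using real_arch_pow[of 2 "max X\<^sub>0 (real n powr (1 + \<delta>))"] by auto
  show "\<forall>\<^sub>F j in sequentially. norm (dyadic_error n j) \<le> K / ln 2 powr C * inverse ((real j * ln 2)\<^sup>2)"
    using eventually_ge_at_top[of j\<^sub>0]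
  proof eventually_elim
    case (elim j)
    have "(2::real) ^ j\<^sub>0 \<le> 2 ^ j"
      using elim by (intro power_increasing) auto
    then have X\<^sub>0: "X\<^sub>0 \<le> 2 ^ j" and n_less: "real n powr (1 + \<delta>) < 2 ^ j"
      using j\<^sub>0 by linarith+
    have "1 \<le> j"
      using X\<^sub>0 X\<^sub>0_ge by (cases j) auto
    have "(real n powr (1 + \<delta>)) powr (1 / (1 + \<delta>)) < (2 ^ j) powr (1 / (1 + \<delta>))"
      using n_less delta_pos by (intro powr_less_mono2) auto
    then have "real n < (2 ^ j) powr (1 / (1 + \<delta>))"
      using delta_pos by (simp add: powr_powr)
    then have "dyadic_error n j \<le> K / (real j * ln 2) powr (C + 2)"
      using sum_dyadic_error_le[OF X\<^sub>0, of "{n}"] assms by simp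
    also have "\<dots> \<le> K / (ln 2 powr C * (real j * ln 2)\<^sup>2)"
      using \<open>1 \<le> j\<close> K_nonneg C_nonneg
      by (intro divide_left_mono powr_mult_square_le mult_pos_pos) auto
    finally show ?case
      using dyadic_error_nonneg[OF assms \<open>1 \<le> j\<close>] by (simp add: field_simps)
  qed
qed

lemma sum_weighted_dyadic_error_le:
  assumes "finite S" "1 < z" "0 \<le> x"
    and S: "\<And>n. n \<in> S \<Longrightarrow>
      1 \<le> n \<and> real n \<le> x \<and> z \<le> y n \<and> X\<^sub>0 \<le> y n \<and> real n \<le> y n powr (1 / (1 + \<delta>))"
  shows "(\<Sum>n\<in>S. real n * (if y n < 2 ^ j then dyadic_error n j else 0))
    \<le> x * K / ln z powr C * inverse ((real j * ln 2)\<^sup>2)"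
proof -
  define S\<^sub>j where "S\<^sub>j = {n \<in> S. y n < 2 ^ j}"
  have "(\<Sum>n\<in>S. real n * (if y n < 2 ^ j then dyadic_error n j else 0))
      = (\<Sum>n\<in>S\<^sub>j. real n * dyadic_error n j)"
    unfolding S\<^sub>j_def by (subst sum.inter_filter[OF assms(1)]) (auto intro!: sum.cong)
  also have "\<dots> \<le> x * K / ln z powr C * inverse ((real j * ln 2)\<^sup>2)"
  proof (cases "S\<^sub>j = {}")
    case True
    then show ?thesis using assms(3) K_nonneg by simp
  next
    case False
    then obtain m where "m \<in> S\<^sub>j" by blast
    then have "z < 2 ^ j" "X\<^sub>0 \<le> 2 ^ j"
      using S[of m] by (auto simp: S\<^sub>j_def)
    then have "1 \<le> j"
      using X\<^sub>0_ge by (cases j) auto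
    have "ln z \<le> real j * ln 2"
      using \<open>z < 2 ^ j\<close> assms(2) by (simp add: ln_realpow[symmetric])
    have small: "1 \<le> k \<and> real k < (2 ^ j) powr (1 / (1 + \<delta>))" if "k \<in> S\<^sub>j" for k
    proof -
      have "y k powr (1 / (1 + \<delta>)) < (2 ^ j) powr (1 / (1 + \<delta>))"
        using that S[of k] X\<^sub>0_ge delta_pos by (intro powr_less_mono2) (auto simp: S\<^sub>j_def)
      then show ?thesis
        using that S[of k] by (auto simp: S\<^sub>j_def)
    qed
    have "(\<Sum>n\<in>S\<^sub>j. real n * dyadic_error n j) \<le> (\<Sum>n\<in>S\<^sub>j. x * dyadic_error n j)"
      using S \<open>1 \<le> j\<close> by (intro sum_mono mult_right_mono dyadic_error_nonneg) (auto simp: S\<^sub>j_def)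
    also have "\<dots> = x * (\<Sum>n\<in>S\<^sub>j. dyadic_error n j)"
      by (simp add: sum_distrib_left)
    also have "\<dots> \<le> x * (K / (real j * ln 2) powr (C + 2))"
      using \<open>X\<^sub>0 \<le> 2 ^ j\<close> small assms(3) by (intro mult_left_mono sum_dyadic_error_le) auto
    also have "\<dots> \<le> x * (K / (ln z powr C * (real j * ln 2)\<^sup>2))"
      using \<open>ln z \<le> real j * ln 2\<close> \<open>1 \<le> j\<close> assms(2,3) K_nonneg C_nonneg
      by (intro mult_left_mono divide_left_mono powr_mult_square_le mult_pos_pos) auto
    finally show ?thesis
      by (simp add: field_simps)
  qed
  finally show ?thesis .
qed

lemma sum_weighted_dyadic_tail_le:
  assumes "finite S" "1 < z" "0 \<le> x"
    and S: "\<And>n. n \<in> S \<Longrightarrow>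
      1 \<le> n \<and> real n \<le> x \<and> z \<le> y n \<and> X\<^sub>0 \<le> y n \<and> real n \<le> y n powr (1 / (1 + \<delta>))"
  shows "(\<Sum>n\<in>S. real n * dyadic_tail n (y n))
    \<le> K * (\<Sum>j. inverse ((real j * ln 2)\<^sup>2)) * x / ln z powr C"
proof -
  let ?t = "\<lambda>n j. if y n < 2 ^ j then dyadic_error n j else 0"
  have summable: "summable (?t n)" if "n \<in> S" for n
    using S[OF that] by (intro summable_dyadic_tail_terms summable_dyadic_error) auto
  have "(\<Sum>n\<in>S. real n * dyadic_tail n (y n)) = (\<Sum>n\<in>S. \<Sum>j. real n * ?t n j)"
    unfolding dyadic_tail_def using summable by (intro sum.cong refl suminf_mult[symmetric]) auto
  also have "\<dots> = (\<Sum>j. \<Sum>n\<in>S. real n * ?t n j)"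
    using summable by (intro suminf_sum[symmetric] summable_mult) auto
  also have "\<dots> \<le> (\<Sum>j. x * K / ln z powr C * inverse ((real j * ln 2)\<^sup>2))"
    using summable assms
    by (intro suminf_le summable_sum summable_mult summable_inverse_ln_two_power_square
        sum_weighted_dyadic_error_le) auto
  also have "\<dots> = x * K / ln z powr C * (\<Sum>j. inverse ((real j * ln 2)\<^sup>2))"
    by (rule suminf_mult[OF summable_inverse_ln_two_power_square])
  also have "\<dots> = K * (\<Sum>j. inverse ((real j * ln 2)\<^sup>2)) * x / ln z powr C"
    by (simp add: field_simps)
  finally show ?thesis .
qed

lemma exceptional_weight_ge:
  assumes "0 < \<epsilon>" "3 \<le> n" "X\<^sub>0 \<le> real n"
    and "\<bar>g_lim n - g_partial n (real n powr (1 + \<delta>))\<bar> > \<epsilon> / real n"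
  shows "1 \<le> 8 / \<epsilon> * (real n * dyadic_tail n (real n powr (1 + \<delta>)))"
proof -
  have "real n powr 1 \<le> real n powr (1 + \<delta>)"
    using assms(2) delta_pos by (intro powr_mono) auto
  then have "2 \<le> real n powr (1 + \<delta>)"
    using assms(3) X\<^sub>0_ge by simp
  then have "\<epsilon> / real n < 8 * dyadic_tail n (real n powr (1 + \<delta>))"
    using assms(2,4) g_lim_dist_le summable_dyadic_error[of n] by fastforce
  then show ?thesis
    using assms(1,2) by (simp add: field_simps)
qed

lemma card_large_exceptional_le:
  assumes "0 < \<epsilon>" "3 \<le> N" "X\<^sub>0 \<le> real N" "4 \<le> x"
  shows "real (card {n \<in> {n. N \<le> n \<and> sqrt x < real n \<and> real n \<le> x}.
      \<bar>g_lim n - g_partial n (real n powr (1 + \<delta>))\<bar> > \<epsilon> / real n})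
    \<le> 8 / \<epsilon> * K * (\<Sum>j. inverse ((real j * ln 2)\<^sup>2)) * 2 powr C * x / ln x powr C"
proof -
  let ?S = "{n. N \<le> n \<and> sqrt x < real n \<and> real n \<le> x}" and ?y = "\<lambda>n::nat. real n powr (1 + \<delta>)"
  have "finite ?S"
    by (rule finite_subset[of _ "{..nat \<lfloor>x\<rfloor>}"]) (use le_nat_floor in auto)
  have S: "1 \<le> n \<and> real n \<le> x \<and> sqrt x \<le> ?y n \<and> X\<^sub>0 \<le> ?y n \<and> real n \<le> ?y n powr (1 / (1 + \<delta>))"
    if "n \<in> ?S" for n
  proof -
    have "real n powr 1 \<le> ?y n"
      using that assms(2) delta_pos by (intro powr_mono) auto
    moreover have "?y n powr (1 / (1 + \<delta>)) = real n"
      using delta_pos by (simp add: powr_powr)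
    ultimately show ?thesis
      using that assms(2,3) by auto
  qed
  have "real (card {n \<in> ?S. \<bar>g_lim n - g_partial n (?y n)\<bar> > \<epsilon> / real n})
      \<le> (\<Sum>n\<in>?S. 8 / \<epsilon> * (real n * dyadic_tail n (?y n)))"
  proof (rule card_le_sum_weights[OF \<open>finite ?S\<close>])
    show "0 \<le> 8 / \<epsilon> * (real n * dyadic_tail n (?y n))" if "n \<in> ?S" for n
      using S[OF that] X\<^sub>0_ge assms(1)
      by (intro mult_nonneg_nonneg dyadic_tail_nonneg summable_dyadic_error) auto
    show "1 \<le> 8 / \<epsilon> * (real n * dyadic_tail n (?y n))"
      if "n \<in> ?S" "\<bar>g_lim n - g_partial n (?y n)\<bar> > \<epsilon> / real n" for n
      using that assms by (intro exceptional_weight_ge) auto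
  qed
  also have "\<dots> = 8 / \<epsilon> * (\<Sum>n\<in>?S. real n * dyadic_tail n (?y n))"
    by (simp add: sum_distrib_left)
  also have "\<dots> \<le> 8 / \<epsilon> * (K * (\<Sum>j. inverse ((real j * ln 2)\<^sup>2)) * x / ln (sqrt x) powr C)"
    using S assms(1,4) \<open>finite ?S\<close>
    by (intro mult_left_mono sum_weighted_dyadic_tail_le) (auto simp: real_less_rsqrt)
  also have "ln (sqrt x) powr C = ln x powr C / 2 powr C"
    using assms(4) by (simp add: ln_sqrt powr_divide)
  finally show ?thesis
    by (simp add: field_simps)
qed

theorem card_exceptional_le:
  assumes "0 < \<epsilon>"
  shows "\<exists>B. \<forall>\<^sub>F x in at_top.
    real (card {n::nat. 1 \<le> n \<and> real n \<le> x \<and> \<bar>g_lim n - g_partial n (real n powr (1 + \<delta>))\<bar> > \<epsilon> / real n})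
      \<le> B * x / ln x powr C"
proof
  define N where "N = max 3 (nat \<lceil>X\<^sub>0\<rceil>)"
  define B where "B = 8 / \<epsilon> * K * (\<Sum>j. inverse ((real j * ln 2)\<^sup>2)) * 2 powr C"
  have "3 \<le> N" "X\<^sub>0 \<le> real N"
    unfolding N_def by linarith+
  have "\<forall>\<^sub>F x in at_top. real N + sqrt x \<le> x / ln x powr C"
    using C_nonneg by real_asymp
  then show "\<forall>\<^sub>F x in at_top.
    real (card {n::nat. 1 \<le> n \<and> real n \<le> x \<and> \<bar>g_lim n - g_partial n (real n powr (1 + \<delta>))\<bar> > \<epsilon> / real n})
      \<le> (B + 1) * x / ln x powr C"
    using eventually_ge_at_top[of 4]
  proof eventually_elim
    case (elim x)
    let ?P = "\<lambda>n. \<epsilon> / real n < \<bar>g_lim n - g_partial n (real n powr (1 + \<delta>))\<bar>"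
    have "real (card {n. 1 \<le> n \<and> real n \<le> x \<and> ?P n})
        \<le> real N + sqrt x + real (card {n \<in> {n. N \<le> n \<and> sqrt x < real n \<and> real n \<le> x}. ?P n})"
      using elim(2) by (intro card_le_small_plus_large) simp
    moreover have "real (card {n \<in> {n. N \<le> n \<and> sqrt x < real n \<and> real n \<le> x}. ?P n})
        \<le> B * x / ln x powr C"
      unfolding B_def using card_large_exceptional_le[OF assms \<open>3 \<le> N\<close> \<open>X\<^sub>0 \<le> real N\<close> elim(2)] .
    moreover have "(B + 1) * x / ln x powr C = B * x / ln x powr C + x / ln x powr C"
      by (simp add: distrib_right add_divide_distrib)
    ultimately show ?case
      using elim(1) by linarith
  qed
qed

end

lemma EH_bound_of_Elliott_Halberstam:
  assumes "Elliott_Halberstam" "0 < \<delta>" "0 \<le> C"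
  shows "\<exists>K X\<^sub>0. EH_bound \<delta> C K X\<^sub>0"
proof -
  have "0 < \<delta> / (1 + \<delta>)" "0 < C + 2"
    using assms(2,3) by auto
  then obtain K where "\<forall>\<^sub>F x in at_top.
      (\<Sum>k\<in>{k. 1 \<le> k \<and> real k < x powr (1 - \<delta> / (1 + \<delta>))}. EH_error x k) \<le> K * x / ln x powr (C + 2)"
    using assms(1) unfolding Elliott_Halberstam_def by blast
  moreover have "1 - \<delta> / (1 + \<delta>) = 1 / (1 + \<delta>)"
    using assms(2) by (simp add: field_simps)
  ultimately obtain X where X: "\<And>x. X \<le> x \<Longrightarrow>
      (\<Sum>k\<in>{k. 1 \<le> k \<and> real k < x powr (1 / (1 + \<delta>))}. EH_error x k) \<le> K * x / ln x powr (C + 2)"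
    by (auto simp: eventually_at_top_linorder)
  have "EH_bound \<delta> C (max K 0) (max X 2)"
  proof unfold_locales
    fix x :: real
    assume x: "max X 2 \<le> x"
    then have "(\<Sum>k\<in>{k. 1 \<le> k \<and> real k < x powr (1 / (1 + \<delta>))}. EH_error x k) \<le> K * x / ln x powr (C + 2)"
      by (intro X) simp
    also have "\<dots> \<le> max K 0 * x / ln x powr (C + 2)"
      using x by (intro divide_right_mono mult_right_mono) auto
    finally show "(\<Sum>k\<in>{k. 1 \<le> k \<and> real k < x powr (1 / (1 + \<delta>))}. EH_error x k)
        \<le> max K 0 * x / ln x powr (C + 2)" .
  qed (use assms in auto)
  then show ?thesis by blast
qed

theorem proposition2:
  fixes \<delta> C :: real
  assumes EH: Elliott_Halberstam
    and "\<delta> > 0" and "C \<ge> 3"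
  shows "\<forall>\<epsilon>>0. \<exists>K. \<forall>\<^sub>F x in at_top.
           real (card {n::nat. 1 \<le> n \<and> real n \<le> x \<and>
              \<bar>g_lim n - g_partial n (real n powr (1 + \<delta>))\<bar> > \<epsilon> / real n})
           \<le> K * x / (ln x) powr C"
proof (intro allI impI)
  fix \<epsilon> :: real
  assume "\<epsilon> > 0"
  obtain K X\<^sub>0 where "EH_bound \<delta> C K X\<^sub>0"
    using EH_bound_of_Elliott_Halberstam assms by fastforce
  then show "\<exists>K. \<forall>\<^sub>F x in at_top.
           real (card {n::nat. 1 \<le> n \<and> real n \<le> x \<and>
              \<bar>g_lim n - g_partial n (real n powr (1 + \<delta>))\<bar> > \<epsilon> / real n})
           \<le> K * x / (ln x) powr C"
    using EH_bound.card_exceptional_le \<open>\<epsilon> > 0\<close> by blast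
qed

end
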